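(* Let $G$ be a connected graph with infinitely many nodes. Then the enlargement ${}^{*}G$ has either exactly one galaxy (its principal galaxy) or infinitely many galaxies.
   Context: Conventions. $G=\{X,B\}$ is a graph whose branches are two-element subsets of $X$, and $d$ is the graph distance. Fix a free ultrafilter $\mathcal F$ on $\mathbb N$. Hypernodes and enlargement. Hypernodes are classes $[x_n]$ of node sequences, with two sequences identified when they agree on a set in $\mathcal F$. A standard hypernode is the class of a constant sequence. ${}^{*}G$ consists of the hypernodes and the hyperbranches $[\{x_n,y_n\}]$ with $\{n:\{x_n,y_n\}\in B\}\in\mathcal F$. Galaxies. Hypernodes $[x_n]$ and $[y_n]$ are limitedly distant if $\{n:d(x_n,y_n)\le k\}\in\mathcal F$ for some $k\in\mathbb N$. Galaxies are the classes of this equivalence relation, together with the hyperbranches between their hypernodes. The principal galaxy contains the standard hypernodes. *)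

theory Defs
  imports Main
begin

definition free_ultrafilter :: "nat set set \<Rightarrow> bool" where
  "free_ultrafilter U \<longleftrightarrow>
     UNIV \<in> U \<and> {} \<notin> U \<and>
     (\<forall>A B. A \<in> U \<and> B \<in> U \<longrightarrow> A \<inter> B \<in> U) \<and>
     (\<forall>A B. A \<in> U \<and> A \<subseteq> B \<longrightarrow> B \<in> U) \<and>
     (\<forall>A. A \<in> U \<or> - A \<in> U) \<and>
     (\<forall>A. finite A \<longrightarrow> A \<notin> U)"

definition graph :: "'a set \<Rightarrow> 'a set set \<Rightarrow> bool" where
  "graph X B \<longleftrightarrow> (\<forall>e\<in>B. \<exists>x y. x \<in> X \<and> y \<in> X \<and> x \<noteq> y \<and> e = {x, y})"

text \<open>A walk from x to y: a nonempty list of nodes, consecutive ones joined by a branch.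
  Its length is the number of branches traversed, i.e. length of the list minus one.\<close>
definition walk :: "'a set \<Rightarrow> 'a set set \<Rightarrow> 'a list \<Rightarrow> 'a \<Rightarrow> 'a \<Rightarrow> bool" where
  "walk X B ps x y \<longleftrightarrow> ps \<noteq> [] \<and> hd ps = x \<and> last ps = y \<and> set ps \<subseteq> X \<and>
     (\<forall>i. Suc i < length ps \<longrightarrow> {ps ! i, ps ! Suc i} \<in> B)"

definition connected_graph :: "'a set \<Rightarrow> 'a set set \<Rightarrow> bool" where
  "connected_graph X B \<longleftrightarrow> (\<forall>x\<in>X. \<forall>y\<in>X. \<exists>ps. walk X B ps x y)"

definition gdist :: "'a set \<Rightarrow> 'a set set \<Rightarrow> 'a \<Rightarrow> 'a \<Rightarrow> nat" where
  "gdist X B x y = (LEAST n. \<exists>ps. walk X B ps x y \<and> length ps = Suc n)"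

definition node_seqs :: "'a set \<Rightarrow> (nat \<Rightarrow> 'a) set" where
  "node_seqs X = {s. \<forall>n. s n \<in> X}"

definition hyper_eq :: "nat set set \<Rightarrow> 'a set \<Rightarrow> ((nat \<Rightarrow> 'a) \<times> (nat \<Rightarrow> 'a)) set" where
  "hyper_eq U X = {(s, t). s \<in> node_seqs X \<and> t \<in> node_seqs X \<and> {n. s n = t n} \<in> U}"

definition hypernodes :: "nat set set \<Rightarrow> 'a set \<Rightarrow> (nat \<Rightarrow> 'a) set set" where
  "hypernodes U X = node_seqs X // hyper_eq U X"

definition hypernode_of :: "nat set set \<Rightarrow> 'a set \<Rightarrow> (nat \<Rightarrow> 'a) \<Rightarrow> (nat \<Rightarrow> 'a) set" where
  "hypernode_of U X s = hyper_eq U X `` {s}"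

definition lim_distant :: "nat set set \<Rightarrow> 'a set \<Rightarrow> 'a set set \<Rightarrow>
    ((nat \<Rightarrow> 'a) set \<times> (nat \<Rightarrow> 'a) set) set" where
  "lim_distant U X B = {(P, Q). P \<in> hypernodes U X \<and> Q \<in> hypernodes U X \<and>
     (\<exists>s\<in>P. \<exists>t\<in>Q. \<exists>k::nat. {n. gdist X B (s n) (t n) \<le> k} \<in> U)}"

text \<open>Galaxies: equivalence classes of hypernodes under limited distance
  (the hyperbranches between their hypernodes do not affect the count).\<close>
definition galaxies :: "nat set set \<Rightarrow> 'a set \<Rightarrow> 'a set set \<Rightarrow> (nat \<Rightarrow> 'a) set set set" where
  "galaxies U X B = hypernodes U X // lim_distant U X B"

definition principal_galaxy :: "nat set set \<Rightarrow> 'a set \<Rightarrow> 'a set set \<Rightarrow> (nat \<Rightarrow> 'a) set set" where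
  "principal_galaxy U X B =
     {Q. \<exists>x\<in>X. (hypernode_of U X (\<lambda>_. x), Q) \<in> lim_distant U X B}"

end

theory Submission
  imports Defs
begin

text \<open>If some hypernode [s] lies outside the principal galaxy, then D n = d(x0, s n) is unlimited.
  Distances from x0 grow by at most one along a branch, so every value below D n is attained:
  there are nodes t m n with d(x0, t m n) = D n div 2^m. For m < m' the reverse triangle
  inequality bounds d(t m n, t m' n) from below by D n div 2^m', which is again unlimited, so
  the hypernodes [t m] lie in pairwise different galaxies.\<close>

lemma walk_iff_successively:
  "walk X B ps x y \<longleftrightarrow>
     ps \<noteq> [] \<and> hd ps = x \<and> last ps = y \<and> set ps \<subseteq> X \<and>
     successively (\<lambda>a b. {a, b} \<in> B) ps"
  unfolding walk_def successively_conv_nth ..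

lemma walk_length_eq_Suc: "walk X B ps x y \<Longrightarrow> length ps = Suc (length ps - 1)"
  unfolding walk_def by (cases ps) auto

lemma walk_append:
  assumes "walk X B ps x y" and "walk X B qs y z"
  shows "walk X B (ps @ tl qs) x z"
proof -
  obtain qs' where qs: "qs = y # qs'"
    using assms(2) unfolding walk_def by (cases qs) auto
  show ?thesis
    using assms unfolding walk_iff_successively qs
    by (auto simp: successively_append_iff successively_Cons)
qed

lemma walk_rev: "walk X B ps x y \<Longrightarrow> walk X B (rev ps) y x"
  unfolding walk_iff_successively by (simp add: hd_rev last_rev insert_commute)

lemma gdist_le_walk:
  assumes "walk X B ps x y"
  shows "gdist X B x y \<le> length ps - 1"
  unfolding gdist_def by (rule Least_le) (use assms walk_length_eq_Suc[OF assms] in metis)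

lemma gdist_shortest_walk:
  assumes "connected_graph X B" and "x \<in> X" and "y \<in> X"
  obtains ps where "walk X B ps x y" and "length ps = Suc (gdist X B x y)"
proof -
  obtain ps where ps: "walk X B ps x y"
    using assms unfolding connected_graph_def by blast
  with walk_length_eq_Suc[OF ps] have "\<exists>n ps. walk X B ps x y \<and> length ps = Suc n"
    by blast
  from LeastI_ex[OF this] show ?thesis
    using that unfolding gdist_def by blast
qed

lemma gdist_self: "x \<in> X \<Longrightarrow> gdist X B x x = 0"
  using gdist_le_walk[of X B "[x]" x x] by (simp add: walk_def)

lemma gdist_edge: "a \<in> X \<Longrightarrow> b \<in> X \<Longrightarrow> {a, b} \<in> B \<Longrightarrow> gdist X B a b \<le> 1"
  using gdist_le_walk[of X B "[a, b]" a b] by (simp add: walk_iff_successively)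

lemma gdist_triangle:
  assumes "connected_graph X B" and "x \<in> X" and "y \<in> X" and "z \<in> X"
  shows "gdist X B x z \<le> gdist X B x y + gdist X B y z"
proof -
  obtain ps where ps: "walk X B ps x y" "length ps = Suc (gdist X B x y)"
    using gdist_shortest_walk[OF assms(1-3)] by blast
  obtain qs where qs: "walk X B qs y z" "length qs = Suc (gdist X B y z)"
    using gdist_shortest_walk[OF assms(1,3,4)] by blast
  show ?thesis
    using gdist_le_walk[OF walk_append[OF ps(1) qs(1)]] ps(2) qs(2) by simp
qed

lemma gdist_commute:
  assumes "connected_graph X B" and "x \<in> X" and "y \<in> X"
  shows "gdist X B x y = gdist X B y x"
proof -
  have le: "gdist X B a b \<le> gdist X B b a" if ab: "a \<in> X" "b \<in> X" for a b
  proof -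
    obtain ps where "walk X B ps b a" "length ps = Suc (gdist X B b a)"
      using gdist_shortest_walk[OF assms(1) ab(2,1)] by blast
    then show ?thesis using gdist_le_walk[OF walk_rev] by fastforce
  qed
  show ?thesis using le assms(2,3) by (simp add: order_antisym)
qed

lemma gdist_reverse_triangle:
  assumes "connected_graph X B" and "x \<in> X" and "y \<in> X" and "z \<in> X"
  shows "gdist X B x y - gdist X B x z \<le> gdist X B y z"
  using gdist_triangle[OF assms(1,2,4,3)] gdist_commute[OF assms(1,3,4)] by simp

lemma successively_Suc_bound_intermediate_value:
  fixes f :: "'a \<Rightarrow> nat"
  assumes "successively (\<lambda>a b. f b \<le> Suc (f a)) ps" and "ps \<noteq> []"
    and "f (hd ps) \<le> k" and "k \<le> f (last ps)"
  shows "\<exists>y\<in>set ps. f y = k"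
  using assms
proof (induction ps)
  case (Cons a ps)
  show ?case
  proof (cases "f a = k")
    case False
    with Cons.prems have "ps \<noteq> []" and "f (hd ps) \<le> k"
      by (auto simp: successively_Cons)
    with Cons show ?thesis by (auto simp: successively_Cons)
  qed simp
qed simp

lemma gdist_intermediate_value:
  assumes G: "connected_graph X B" and x: "x \<in> X" and z: "z \<in> X" and k: "k \<le> gdist X B x z"
  obtains y where "y \<in> X" and "gdist X B x y = k"
proof -
  obtain ps where ps: "walk X B ps x z"
    using G x z unfolding connected_graph_def by blast
  have step: "gdist X B x b \<le> Suc (gdist X B x a)" if "a \<in> X" "b \<in> X" "{a, b} \<in> B" for a b
    using gdist_triangle[OF G x that(1,2)] gdist_edge[OF that] by simp
  have edges: "successively (\<lambda>a b. {a, b} \<in> B) ps" and nodes: "set ps \<subseteq> X"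
    using ps unfolding walk_iff_successively by auto
  have "successively (\<lambda>a b. gdist X B x b \<le> Suc (gdist X B x a)) ps"
    by (rule successively_mono[OF edges]) (use step nodes in blast)
  then have "\<exists>y\<in>set ps. gdist X B x y = k"
    using ps k gdist_self[OF x]
    by (intro successively_Suc_bound_intermediate_value) (auto simp: walk_def)
  then show ?thesis using ps that unfolding walk_def by blast
qed

lemma free_ultrafilter_UNIV: "free_ultrafilter U \<Longrightarrow> UNIV \<in> U"
  unfolding free_ultrafilter_def by simp

lemma free_ultrafilter_nonempty: "free_ultrafilter U \<Longrightarrow> A \<in> U \<Longrightarrow> A \<noteq> {}"
  unfolding free_ultrafilter_def by auto

lemma free_ultrafilter_subset: "free_ultrafilter U \<Longrightarrow> A \<in> U \<Longrightarrow> A \<subseteq> C \<Longrightarrow> C \<in> U"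
  unfolding free_ultrafilter_def by simp

lemma free_ultrafilter_Int_subset:
  assumes "free_ultrafilter U" and "A \<in> U" and "A' \<in> U" and "A \<inter> A' \<subseteq> C"
  shows "C \<in> U"
proof -
  have "A \<inter> A' \<in> U"
    using assms(1-3) unfolding free_ultrafilter_def by simp
  then show ?thesis
    using free_ultrafilter_subset[OF assms(1) _ assms(4)] by simp
qed

lemma free_ultrafilter_Compl: "free_ultrafilter U \<Longrightarrow> A \<notin> U \<Longrightarrow> - A \<in> U"
  unfolding free_ultrafilter_def by auto

definition unlimited :: "nat set set \<Rightarrow> (nat \<Rightarrow> nat) \<Rightarrow> bool" where
  "unlimited U f \<longleftrightarrow> (\<forall>K. {n. K < f n} \<in> U)"

lemma unlimited_mono:
  assumes "free_ultrafilter U" and "unlimited U f" and "\<And>n. f n \<le> g n"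
  shows "unlimited U g"
  unfolding unlimited_def
proof
  fix K
  have "{n. K < f n} \<subseteq> {n. K < g n}"
    using assms(3) order_less_le_trans by blast
  then show "{n. K < g n} \<in> U"
    using assms(1,2) free_ultrafilter_subset unfolding unlimited_def by blast
qed

lemma unlimited_div:
  assumes "free_ultrafilter U" and "unlimited U f" and "0 < c"
  shows "unlimited U (\<lambda>n. f n div c)"
  unfolding unlimited_def
proof
  fix K
  have "K < f n div c" if "Suc K * c < f n" for n
    using that less_eq_div_iff_mult_less_eq[OF assms(3), of "Suc K" "f n"] by simp
  then have "{n. Suc K * c < f n} \<subseteq> {n. K < f n div c}"
    by blast
  then show "{n. K < f n div c} \<in> U"
    using assms(1,2) free_ultrafilter_subset unfolding unlimited_def by blast
qed

lemma div_power2_le_diff: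
  fixes D :: nat
  assumes "m < m'"
  shows "D div 2 ^ m' \<le> D div 2 ^ m - D div 2 ^ m'"
proof -
  have "2 ^ Suc m \<le> (2::nat) ^ m'"
    using assms by (intro power_increasing) simp_all
  then have "D div 2 ^ m' \<le> D div 2 ^ Suc m"
    by (intro div_le_mono2) simp_all
  also have "\<dots> = D div 2 ^ m div 2"
    by (metis div_mult2_eq power_Suc2)
  finally show ?thesis by linarith
qed

definition seq_lim_distant ::
    "nat set set \<Rightarrow> 'a set \<Rightarrow> 'a set set \<Rightarrow> (nat \<Rightarrow> 'a) \<Rightarrow> (nat \<Rightarrow> 'a) \<Rightarrow> bool" where
  "seq_lim_distant U X B s t \<longleftrightarrow> (\<exists>k. {n. gdist X B (s n) (t n) \<le> k} \<in> U)"

lemma not_seq_lim_distant_iff_unlimited: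
  assumes "free_ultrafilter U"
  shows "\<not> seq_lim_distant U X B s t \<longleftrightarrow> unlimited U (\<lambda>n. gdist X B (s n) (t n))"
proof
  assume "\<not> seq_lim_distant U X B s t"
  then have "- {n. gdist X B (s n) (t n) \<le> K} \<in> U" for K
    using free_ultrafilter_Compl[OF assms] unfolding seq_lim_distant_def by blast
  moreover have "- {n. gdist X B (s n) (t n) \<le> K} = {n. K < gdist X B (s n) (t n)}" for K
    by auto
  ultimately show "unlimited U (\<lambda>n. gdist X B (s n) (t n))"
    unfolding unlimited_def by simp
next
  assume unl: "unlimited U (\<lambda>n. gdist X B (s n) (t n))"
  show "\<not> seq_lim_distant U X B s t"
  proof
    assume "seq_lim_distant U X B s t"
    then obtain k where "{n. gdist X B (s n) (t n) \<le> k} \<in> U"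
      unfolding seq_lim_distant_def by blast
    moreover have "{n. k < gdist X B (s n) (t n)} \<in> U"
      using unl unfolding unlimited_def by blast
    ultimately have "{n. gdist X B (s n) (t n) \<le> k} \<inter> {n. k < gdist X B (s n) (t n)} \<in> U"
      using free_ultrafilter_Int_subset[OF assms] by blast
    moreover have "{n. gdist X B (s n) (t n) \<le> k} \<inter> {n. k < gdist X B (s n) (t n)} = {}"
      by auto
    ultimately show False
      using free_ultrafilter_nonempty[OF assms] by metis
  qed
qed

lemma seq_lim_distant_refl:
  "free_ultrafilter U \<Longrightarrow> s \<in> node_seqs X \<Longrightarrow> seq_lim_distant U X B s s"
  unfolding seq_lim_distant_def node_seqs_def
  by (rule exI[of _ 0]) (simp add: gdist_self free_ultrafilter_UNIV)

lemma seq_lim_distant_const: "free_ultrafilter U \<Longrightarrow> seq_lim_distant U X B (\<lambda>_. x) (\<lambda>_. y)"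
  unfolding seq_lim_distant_def
  by (rule exI[of _ "gdist X B x y"]) (simp add: free_ultrafilter_UNIV)

lemma seq_lim_distant_sym:
  assumes "connected_graph X B" and "s \<in> node_seqs X" and "t \<in> node_seqs X"
    and "seq_lim_distant U X B s t"
  shows "seq_lim_distant U X B t s"
proof -
  have "gdist X B (s n) (t n) = gdist X B (t n) (s n)" for n
    using gdist_commute[OF assms(1), of "s n" "t n"] assms(2,3) by (simp add: node_seqs_def)
  then show ?thesis
    using assms(4) unfolding seq_lim_distant_def by simp
qed

lemma seq_lim_distant_trans:
  assumes U: "free_ultrafilter U" and G: "connected_graph X B"
    and "s \<in> node_seqs X" and "t \<in> node_seqs X" and "u \<in> node_seqs X"
    and "seq_lim_distant U X B s t" and "seq_lim_distant U X B t u"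
  shows "seq_lim_distant U X B s u"
proof -
  obtain k l where k: "{n. gdist X B (s n) (t n) \<le> k} \<in> U"
    and l: "{n. gdist X B (t n) (u n) \<le> l} \<in> U"
    using assms(6,7) unfolding seq_lim_distant_def by blast
  have tri: "gdist X B (s n) (u n) \<le> gdist X B (s n) (t n) + gdist X B (t n) (u n)" for n
    using gdist_triangle[OF G, of "s n" "t n" "u n"] assms(3-5) by (simp add: node_seqs_def)
  have "{n. gdist X B (s n) (t n) \<le> k} \<inter> {n. gdist X B (t n) (u n) \<le> l}
      \<subseteq> {n. gdist X B (s n) (u n) \<le> k + l}"
  proof
    fix n
    assume "n \<in> {n. gdist X B (s n) (t n) \<le> k} \<inter> {n. gdist X B (t n) (u n) \<le> l}"
    then show "n \<in> {n. gdist X B (s n) (u n) \<le> k + l}"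
      using tri[of n] by simp
  qed
  then show ?thesis
    unfolding seq_lim_distant_def using free_ultrafilter_Int_subset[OF U k l] by blast
qed

lemma seq_lim_distant_cong:
  assumes U: "free_ultrafilter U" and "seq_lim_distant U X B s t"
    and "{n. s n = s' n} \<in> U" and "{n. t n = t' n} \<in> U"
  shows "seq_lim_distant U X B s' t'"
proof -
  obtain k where k: "{n. gdist X B (s n) (t n) \<le> k} \<in> U"
    using assms(2) unfolding seq_lim_distant_def by blast
  have "{n. s n = s' n} \<inter> {n. t n = t' n} \<in> U"
    using free_ultrafilter_Int_subset[OF U assms(3,4)] by blast
  moreover have "{n. gdist X B (s n) (t n) \<le> k} \<inter> ({n. s n = s' n} \<inter> {n. t n = t' n})
      \<subseteq> {n. gdist X B (s' n) (t' n) \<le> k}"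
    by auto
  ultimately show ?thesis
    unfolding seq_lim_distant_def using free_ultrafilter_Int_subset[OF U k] by blast
qed

lemma mem_hypernode_of_iff:
  "t \<in> hypernode_of U X s \<longleftrightarrow> s \<in> node_seqs X \<and> t \<in> node_seqs X \<and> {n. s n = t n} \<in> U"
  unfolding hypernode_of_def hyper_eq_def by blast

lemma hypernodes_eq_image: "hypernodes U X = hypernode_of U X ` node_seqs X"
  unfolding hypernodes_def hypernode_of_def quotient_def by blast

lemma lim_distant_hypernode_of_iff:
  assumes U: "free_ultrafilter U" and s: "s \<in> node_seqs X" and t: "t \<in> node_seqs X"
  shows "(hypernode_of U X s, hypernode_of U X t) \<in> lim_distant U X B \<longleftrightarrow>
    seq_lim_distant U X B s t"
proof
  assume "(hypernode_of U X s, hypernode_of U X t) \<in> lim_distant U X B"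
  then obtain s' t' where s': "s' \<in> hypernode_of U X s" and t': "t' \<in> hypernode_of U X t"
    and "seq_lim_distant U X B s' t'"
    unfolding lim_distant_def seq_lim_distant_def by blast
  moreover have "{n. s' n = s n} \<in> U" and "{n. t' n = t n} \<in> U"
    using s' t' unfolding mem_hypernode_of_iff by (simp_all add: eq_commute)
  ultimately show "seq_lim_distant U X B s t"
    using seq_lim_distant_cong[OF U] by blast
next
  assume "seq_lim_distant U X B s t"
  moreover have "s \<in> hypernode_of U X s" "t \<in> hypernode_of U X t"
    using s t free_ultrafilter_UNIV[OF U] by (simp_all add: mem_hypernode_of_iff)
  ultimately show "(hypernode_of U X s, hypernode_of U X t) \<in> lim_distant U X B"
    using s t unfolding lim_distant_def seq_lim_distant_def hypernodes_eq_image by blast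
qed

lemma equiv_lim_distant:
  assumes U: "free_ultrafilter U" and G: "connected_graph X B"
  shows "equiv (hypernodes U X) (lim_distant U X B)"
proof (rule equivI)
  show "lim_distant U X B \<subseteq> hypernodes U X \<times> hypernodes U X"
    unfolding lim_distant_def by blast
  have "(P, P) \<in> lim_distant U X B" if "P \<in> hypernodes U X" for P
    using that seq_lim_distant_refl[OF U] lim_distant_hypernode_of_iff[OF U]
    unfolding hypernodes_eq_image by blast
  then show "refl_on (hypernodes U X) (lim_distant U X B)"
    unfolding refl_on_def by blast
  show "sym (lim_distant U X B)"
  proof (rule symI)
    fix P Q
    assume PQ: "(P, Q) \<in> lim_distant U X B"
    then obtain s t where "s \<in> node_seqs X" "t \<in> node_seqs X"
      and "P = hypernode_of U X s" "Q = hypernode_of U X t"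
      unfolding lim_distant_def hypernodes_eq_image by blast
    with PQ show "(Q, P) \<in> lim_distant U X B"
      using seq_lim_distant_sym[OF G] lim_distant_hypernode_of_iff[OF U] by blast
  qed
  show "trans (lim_distant U X B)"
  proof (rule transI)
    fix P Q R
    assume PQ: "(P, Q) \<in> lim_distant U X B" and QR: "(Q, R) \<in> lim_distant U X B"
    then obtain s t u where "s \<in> node_seqs X" "t \<in> node_seqs X" "u \<in> node_seqs X"
      and "P = hypernode_of U X s" "Q = hypernode_of U X t" "R = hypernode_of U X u"
      unfolding lim_distant_def hypernodes_eq_image by blast
    with PQ QR show "(P, R) \<in> lim_distant U X B"
      using seq_lim_distant_trans[OF U G] lim_distant_hypernode_of_iff[OF U] by blast
  qed
qed

lemma principal_galaxy_eq_class:
  assumes U: "free_ultrafilter U" and G: "connected_graph X B" and x0: "x0 \<in> X"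
  shows "principal_galaxy U X B = lim_distant U X B `` {hypernode_of U X (\<lambda>_. x0)}"
proof
  have const: "(\<lambda>_. x) \<in> node_seqs X" if "x \<in> X" for x
    using that by (simp add: node_seqs_def)
  have to_x: "(hypernode_of U X (\<lambda>_. x0), hypernode_of U X (\<lambda>_. x)) \<in> lim_distant U X B"
    if "x \<in> X" for x
    unfolding lim_distant_hypernode_of_iff[OF U const[OF x0] const[OF that]]
    by (rule seq_lim_distant_const[OF U])
  have "trans (lim_distant U X B)"
    using equiv_lim_distant[OF U G] by (rule equivE)
  then show "principal_galaxy U X B \<subseteq> lim_distant U X B `` {hypernode_of U X (\<lambda>_. x0)}"
    unfolding principal_galaxy_def using to_x by (blast dest: transD)
  show "lim_distant U X B `` {hypernode_of U X (\<lambda>_. x0)} \<subseteq> principal_galaxy U X B"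
    unfolding principal_galaxy_def using x0 by blast
qed

lemma pairwise_not_seq_lim_distant_halvings:
  assumes U: "free_ultrafilter U" and G: "connected_graph X B" and x0: "x0 \<in> X"
    and s: "s \<in> node_seqs X" and unl: "unlimited U (\<lambda>n. gdist X B x0 (s n))"
  obtains t :: "nat \<Rightarrow> nat \<Rightarrow> 'a" where "\<And>m. t m \<in> node_seqs X"
    and "\<And>m m'. m \<noteq> m' \<Longrightarrow> \<not> seq_lim_distant U X B (t m) (t m')"
proof -
  define D where "D n = gdist X B x0 (s n)" for n
  have ex: "\<exists>y. y \<in> X \<and> gdist X B x0 y = D n div 2 ^ m" for m n
  proof -
    have "s n \<in> X"
      using s by (simp add: node_seqs_def)
    moreover have "D n div 2 ^ m \<le> gdist X B x0 (s n)"
      by (simp add: D_def)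
    ultimately show ?thesis
      using gdist_intermediate_value[OF G x0] by metis
  qed
  define t where "t m n = (SOME y. y \<in> X \<and> gdist X B x0 y = D n div 2 ^ m)" for m n
  have t: "t m n \<in> X" and dist_t: "gdist X B x0 (t m n) = D n div 2 ^ m" for m n
    using someI_ex[OF ex[of n m]] unfolding t_def by simp_all
  have t_seqs: "t m \<in> node_seqs X" for m
    using t by (simp add: node_seqs_def)
  have far: "\<not> seq_lim_distant U X B (t m) (t m')" if "m < m'" for m m'
  proof -
    have "unlimited U (\<lambda>n. D n div 2 ^ m')"
      using unlimited_div[OF U] unl unfolding D_def by simp
    then have "unlimited U (\<lambda>n. gdist X B x0 (t m n) - gdist X B x0 (t m' n))"
      by (rule unlimited_mono[OF U]) (simp add: dist_t div_power2_le_diff[OF that])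
    then have "unlimited U (\<lambda>n. gdist X B (t m n) (t m' n))"
      by (rule unlimited_mono[OF U]) (rule gdist_reverse_triangle[OF G x0 t t])
    then show ?thesis
      by (simp add: not_seq_lim_distant_iff_unlimited[OF U])
  qed
  have "\<not> seq_lim_distant U X B (t m) (t m')" if "m \<noteq> m'" for m m'
  proof (cases "m < m'")
    case True
    then show ?thesis
      by (rule far)
  next
    case False
    with that have "m' < m"
      by linarith
    then show ?thesis
      using far seq_lim_distant_sym[OF G t_seqs t_seqs] by blast
  qed
  with t_seqs show ?thesis
    by (rule that[of t])
qed

lemma galaxies_eq_principal_if_all_lim_distant:
  assumes U: "free_ultrafilter U" and G: "connected_graph X B" and x0: "x0 \<in> X"
    and all: "\<forall>s\<in>node_seqs X. seq_lim_distant U X B (\<lambda>_. x0) s"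
  shows "galaxies U X B = {principal_galaxy U X B}"
proof -
  define P0 where "P0 = hypernode_of U X (\<lambda>_. x0)"
  have c0: "(\<lambda>_. x0) \<in> node_seqs X"
    using x0 by (simp add: node_seqs_def)
  then have P0: "P0 \<in> hypernodes U X"
    unfolding P0_def hypernodes_eq_image by blast
  have "(P0, P) \<in> lim_distant U X B" if "P \<in> hypernodes U X" for P
    using that all lim_distant_hypernode_of_iff[OF U c0] unfolding P0_def hypernodes_eq_image by blast
  then have "galaxies U X B = {lim_distant U X B `` {P0}}"
    using P0 equiv_class_eq[OF equiv_lim_distant[OF U G]] unfolding galaxies_def quotient_def by blast
  then show ?thesis
    unfolding P0_def principal_galaxy_eq_class[OF U G x0] .
qed

lemma infinite_galaxies_if_not_lim_distant:
  assumes U: "free_ultrafilter U" and G: "connected_graph X B" and x0: "x0 \<in> X"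
    and s: "s \<in> node_seqs X" and not_principal: "\<not> seq_lim_distant U X B (\<lambda>_. x0) s"
  shows "infinite (galaxies U X B)"
proof -
  have "unlimited U (\<lambda>n. gdist X B x0 (s n))"
    using not_principal not_seq_lim_distant_iff_unlimited[OF U, of X B "\<lambda>_. x0" s] by simp
  then obtain t :: "nat \<Rightarrow> nat \<Rightarrow> 'a" where t: "\<And>m. t m \<in> node_seqs X"
    and far: "\<And>m m'. m \<noteq> m' \<Longrightarrow> \<not> seq_lim_distant U X B (t m) (t m')"
    using pairwise_not_seq_lim_distant_halvings[OF U G x0 s] by blast
  define galaxy where "galaxy m = lim_distant U X B `` {hypernode_of U X (t m)}" for m
  have hyp_t: "hypernode_of U X (t m) \<in> hypernodes U X" for m
    using t unfolding hypernodes_eq_image by blast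
  have "inj galaxy"
  proof (rule injI)
    fix m m'
    assume "galaxy m = galaxy m'"
    then have "seq_lim_distant U X B (t m) (t m')"
      using eq_equiv_class_iff[OF equiv_lim_distant[OF U G] hyp_t hyp_t]
        lim_distant_hypernode_of_iff[OF U t t]
      unfolding galaxy_def by simp
    then show "m = m'"
      using far by blast
  qed
  then have "infinite (range galaxy)"
    using finite_imageD[of galaxy UNIV] by auto
  moreover have "range galaxy \<subseteq> galaxies U X B"
    unfolding galaxy_def galaxies_def using hyp_t by (blast intro: quotientI)
  ultimately show ?thesis
    using infinite_super by blast
qed

theorem mainTheorem5:
  fixes U :: "nat set set" and X :: "'a set" and B :: "'a set set"
  assumes "free_ultrafilter U"
    and "graph X B"
    and "connected_graph X B"
    and "infinite X"
  shows "galaxies U X B = {principal_galaxy U X B} \<or> infinite (galaxies U X B)"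
proof -
  obtain x0 where x0: "x0 \<in> X"
    using assms(4) by fastforce
  show ?thesis
  proof (cases "\<forall>s\<in>node_seqs X. seq_lim_distant U X B (\<lambda>_. x0) s")
    case True
    then show ?thesis
      using galaxies_eq_principal_if_all_lim_distant[OF assms(1,3) x0] by blast
  next
    case False
    then show ?thesis
      using infinite_galaxies_if_not_lim_distant[OF assms(1,3) x0] by blast
  qed
qed

end
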